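(* Consider a vehicle moving in the plane with dynamics $\dot q(t)=f(q(t),u(t))$ and intermittent ranging output $z_k=\|P_k-B_{i_k}\|$, where $P_k=P(t_k)$, and suppose the standing assumptions below (Property and Assumption) hold. Let $u^\star$ be a known admissible input on $[t_0,t_f]$ generating the abstract trajectory $\mathcal{T}$ with measurement points $\mathcal{P}_k(\Delta x,\Delta y,\phi)$, $k=0,\dots,k_f$. If there exists a unique roto-translation $(\Delta x,\Delta y,\phi)$ of $\mathcal{T}$ such that $$\|\mathcal{P}_k(\Delta x,\Delta y,\phi)-B_i\|=\rho_{k,i}$$ for each anchor index $i$ whose measurement is available at time $k$ and for all $k=0,\dots,k_f$, then the system is $u^\star$-constructible.
   Context: A vehicle with state $q\in\mathbb{R}^n$ and input $u\in\mathbb{R}^m$ obeys $\dot q=f(q,u)$; part of $q$ is its planar position $P(t)=[x(t),y(t)]^\top$ in a world frame $\mathcal{W}$. In a vehicle frame $\mathcal{V}$ the initial condition is set to $0$ (the frame is centred at the initial position), and the position $P_V(t)$ in $\mathcal{V}$ is computable from the known input history $u(s)$, $s\in[0,t]$. Property: given $P_V(t)$ for $t\in[t_0,t_f]$, there is a unique triple $(\Delta x,\Delta y,\phi)$ with $P(t)=R_\phi P_V(t)+[\Delta x,\Delta y]^\top$ for all $t\in[t_0,t_f]$, where $R_\phi=\begin{bmatrix}\cos\phi&-\sin\phi\\ \sin\phi&\cos\phi\end{bmatrix}$. Anchors are at known points $B_i=[X_i,Y_i]^\top$, $i=1,\dots,p$. Measurements are taken at known instants $t_k$ ($t_{k+1}>t_k$),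 one per instant: $z_k=\|P(t_k)-B_{i_k}\|$, also denoted $\rho_{k,i}$ with $i=i_k$. Measurement points: $\mathcal{P}_k(\Delta x,\Delta y,\phi)=R_\phi P_V(t_k)+[\Delta x,\Delta y]^\top$, $k=0,\dots,N_m-1$; the abstract trajectory $\mathcal{T}$ is the union of the segments joining consecutive $\mathcal{P}_k$. Assumption: the system with the continuous-time position $P(t)$ as output is constructible (its final state can be reconstructed from the input and output histories). Two final states $q_f,\bar q_f$ are $u^\star$-backward indistinguishable on $T=[t_0,t_f]$ if, under input $u^\star$, the trajectories ending at $q_f$ and $\bar q_f$ produce identical output sequences $z_k$, $k=0,\dots,k_f$; $\mathcal{I}^{u^\star}_{(b)}(q_f)$ denotes the set of final states backward indistinguishable from $q_f$. The system is $u^\star$-constructible at $q_f$ if $\mathcal{I}^{u^\star}_{(b)}(q_f)=\{q_f\}$, and $u^\star$-constructible if this holds at every $q_f$. *)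

theory Defs
  imports "HOL-Analysis.Analysis"
begin

definition rot :: "real \<Rightarrow> real^2 \<Rightarrow> real^2" where
  "rot \<phi> v = vector [cos \<phi> * v$1 - sin \<phi> * v$2, sin \<phi> * v$1 + cos \<phi> * v$2]"

definition pos :: "'n \<Rightarrow> 'n \<Rightarrow> real^'n \<Rightarrow> real^2" where
  "pos ix iy q = vector [q$ix, q$iy]"

definition is_back_traj ::
  "(real^'n \<Rightarrow> real^'m \<Rightarrow> real^'n) \<Rightarrow> (real \<Rightarrow> real^'m) \<Rightarrow> real \<Rightarrow> real
     \<Rightarrow> (real \<Rightarrow> real^'n) \<Rightarrow> real^'n \<Rightarrow> bool" where
  "is_back_traj f u t0 tf x qf \<longleftrightarrow> x tf = qf \<and>
     (\<forall>t\<in>{t0..tf}. (x has_vector_derivative f (x t) (u t)) (at t within {t0..tf}))"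

definition meas :: "'n \<Rightarrow> 'n \<Rightarrow> (nat \<Rightarrow> real^2) \<Rightarrow> (nat \<Rightarrow> nat) \<Rightarrow> (nat \<Rightarrow> real)
     \<Rightarrow> (real \<Rightarrow> real^'n) \<Rightarrow> nat \<Rightarrow> real" where
  "meas ix iy B ik tk x k = norm (pos ix iy (x (tk k)) - B (ik k))"

definition back_indist ::
  "(real^'n \<Rightarrow> real^'m \<Rightarrow> real^'n) \<Rightarrow> (real \<Rightarrow> real^'m) \<Rightarrow> real \<Rightarrow> real
     \<Rightarrow> 'n \<Rightarrow> 'n \<Rightarrow> (nat \<Rightarrow> real^2) \<Rightarrow> (nat \<Rightarrow> nat) \<Rightarrow> (nat \<Rightarrow> real) \<Rightarrow> nat
     \<Rightarrow> real^'n \<Rightarrow> real^'n \<Rightarrow> bool" where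
  "back_indist f u t0 tf ix iy B ik tk kf qf qb \<longleftrightarrow>
     (\<exists>x xb. is_back_traj f u t0 tf x qf \<and> is_back_traj f u t0 tf xb qb \<and>
        (\<forall>k\<le>kf. meas ix iy B ik tk x k = meas ix iy B ik tk xb k))"

definition back_indist_set ::
  "(real^'n \<Rightarrow> real^'m \<Rightarrow> real^'n) \<Rightarrow> (real \<Rightarrow> real^'m) \<Rightarrow> real \<Rightarrow> real
     \<Rightarrow> 'n \<Rightarrow> 'n \<Rightarrow> (nat \<Rightarrow> real^2) \<Rightarrow> (nat \<Rightarrow> nat) \<Rightarrow> (nat \<Rightarrow> real) \<Rightarrow> nat
     \<Rightarrow> real^'n \<Rightarrow> (real^'n) set" where
  "back_indist_set f u t0 tf ix iy B ik tk kf qf = {qb. back_indist f u t0 tf ix iy B ik tk kf qf qb}"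

definition u_constructible ::
  "(real^'n \<Rightarrow> real^'m \<Rightarrow> real^'n) \<Rightarrow> (real \<Rightarrow> real^'m) \<Rightarrow> real \<Rightarrow> real
     \<Rightarrow> 'n \<Rightarrow> 'n \<Rightarrow> (nat \<Rightarrow> real^2) \<Rightarrow> (nat \<Rightarrow> nat) \<Rightarrow> (nat \<Rightarrow> real) \<Rightarrow> nat \<Rightarrow> bool" where
  "u_constructible f u t0 tf ix iy B ik tk kf \<longleftrightarrow>
     (\<forall>qf. back_indist_set f u t0 tf ix iy B ik tk kf qf = {qf})"

text \<open>Measurement point P_k(dx,dy,phi) of the abstract trajectory, PV being the vehicle-frame position.\<close>
definition meas_point :: "(real \<Rightarrow> real^2) \<Rightarrow> (nat \<Rightarrow> real) \<Rightarrow> real \<Rightarrow> real \<Rightarrow> real \<Rightarrow> nat \<Rightarrow> real^2" where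
  "meas_point PV tk dx dy \<phi> k = rot \<phi> (PV (tk k)) + vector [dx, dy]"

end

theory Submission
  imports Defs
begin

text \<open>If two final states are backward indistinguishable, the roto-translations placing the
  abstract trajectory onto either of the two position histories both reproduce the same ranges.
  By uniqueness of the fit they coincide, so the two position histories coincide, and
  constructibility from the continuous position output identifies the final states.\<close>

lemma Ex1_case_prod3_eq:
  assumes "\<exists>!g. (case g of (a, b, c) \<Rightarrow> P a b c)"
    and "P a b c" and "P a' b' c'"
  shows "(a, b, c) = (a', b', c')"
proof -
  from assms(1) have "\<forall>g g'. (case g of (a, b, c) \<Rightarrow> P a b c) \<and> (case g' of (a, b, c) \<Rightarrow> P a b c)
      \<longrightarrow> g = g'"
    by (rule alt_ex1E)
  then show ?thesis
    using assms(2,3) by (metis case_prod_conv)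
qed

lemma norm_meas_point_eq_meas:
  assumes "\<forall>t\<in>{t0..tf}. pos ix iy (x t) = rot \<phi> (PV t) + vector [dx, dy]"
    and "tk k \<in> {t0..tf}"
  shows "norm (meas_point PV tk dx dy \<phi> k - B (ik k)) = meas ix iy B ik tk x k"
  using assms by (simp add: meas_point_def meas_def)

lemma back_indist_refl:
  assumes "is_back_traj f u t0 tf x qf"
  shows "back_indist f u t0 tf ix iy B ik tk kf qf qf"
  using assms unfolding back_indist_def by blast

lemma u_constructibleI:
  assumes "\<And>qf. back_indist f u t0 tf ix iy B ik tk kf qf qf"
    and "\<And>qf qb. back_indist f u t0 tf ix iy B ik tk kf qf qb \<Longrightarrow> qb = qf"
  shows "u_constructible f u t0 tf ix iy B ik tk kf"
  unfolding u_constructible_def back_indist_set_def using assms by blast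

theorem lemma1:
  fixes f :: "real^'n \<Rightarrow> real^'m \<Rightarrow> real^'n"
    and ustar :: "real \<Rightarrow> real^'m"
    and t0 tf :: real
    and ix iy :: 'n
    and PV :: "real \<Rightarrow> real^2"
    and B :: "nat \<Rightarrow> real^2" and p :: nat
    and tk :: "nat \<Rightarrow> real" and ik :: "nat \<Rightarrow> nat" and kf :: nat
  assumes interval: "t0 \<le> tf"
    and pos_idx: "ix \<noteq> iy"
    and times_incr: "\<And>k. k < kf \<Longrightarrow> tk k < tk (Suc k)"
    and times_in: "\<And>k. k \<le> kf \<Longrightarrow> tk k \<in> {t0..tf}"
    and anchors: "\<And>k. k \<le> kf \<Longrightarrow> ik k \<in> {1..p}"
    and well_posed: "\<And>qf. \<exists>x. is_back_traj f ustar t0 tf x qf \<and>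
          (\<forall>y. is_back_traj f ustar t0 tf y qf \<longrightarrow> (\<forall>t\<in>{t0..tf}. y t = x t))"
    and property: "\<And>x qf. is_back_traj f ustar t0 tf x qf \<Longrightarrow>
          \<exists>!g :: real \<times> real \<times> real. (case g of (dx, dy, \<phi>) \<Rightarrow>
             \<phi> \<in> {-pi<..pi} \<and>
             (\<forall>t\<in>{t0..tf}. pos ix iy (x t) = rot \<phi> (PV t) + vector [dx, dy]))"
    and constructible_pos: "\<And>x xb qf qb. is_back_traj f ustar t0 tf x qf \<Longrightarrow>
          is_back_traj f ustar t0 tf xb qb \<Longrightarrow>
          (\<forall>t\<in>{t0..tf}. pos ix iy (x t) = pos ix iy (xb t)) \<Longrightarrow> qf = qb"
    and unique_fit: "\<And>x qf. is_back_traj f ustar t0 tf x qf \<Longrightarrow>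
          \<exists>!g :: real \<times> real \<times> real. (case g of (dx, dy, \<phi>) \<Rightarrow>
             \<phi> \<in> {-pi<..pi} \<and>
             (\<forall>k\<le>kf. norm (meas_point PV tk dx dy \<phi> k - B (ik k)) = meas ix iy B ik tk x k))"
  shows "u_constructible f ustar t0 tf ix iy B ik tk kf"
proof (rule u_constructibleI)
  show "back_indist f ustar t0 tf ix iy B ik tk kf qf qf" for qf
    using well_posed back_indist_refl by blast
next
  fix qf qb
  assume "back_indist f ustar t0 tf ix iy B ik tk kf qf qb"
  then obtain x xb where x: "is_back_traj f ustar t0 tf x qf"
    and xb: "is_back_traj f ustar t0 tf xb qb"
    and same_ranges: "\<forall>k\<le>kf. meas ix iy B ik tk x k = meas ix iy B ik tk xb k"
    unfolding back_indist_def by blast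
  obtain dx dy \<phi> where \<phi>: "\<phi> \<in> {-pi<..pi}"
    and fit: "\<forall>t\<in>{t0..tf}. pos ix iy (x t) = rot \<phi> (PV t) + vector [dx, dy]"
    using property[OF x] by auto
  obtain dx' dy' \<phi>' where \<phi>': "\<phi>' \<in> {-pi<..pi}"
    and fit': "\<forall>t\<in>{t0..tf}. pos ix iy (xb t) = rot \<phi>' (PV t) + vector [dx', dy']"
    using property[OF xb] by auto
  have "\<forall>k\<le>kf. norm (meas_point PV tk dx dy \<phi> k - B (ik k)) = meas ix iy B ik tk x k"
    using norm_meas_point_eq_meas[OF fit] times_in by blast
  moreover have "\<forall>k\<le>kf. norm (meas_point PV tk dx' dy' \<phi>' k - B (ik k)) = meas ix iy B ik tk x k"
    using norm_meas_point_eq_meas[OF fit'] times_in same_ranges by simp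
  ultimately have "(dx, dy, \<phi>) = (dx', dy', \<phi>')"
    using Ex1_case_prod3_eq[OF unique_fit[OF x]] \<phi> \<phi>' by blast
  then have "\<forall>t\<in>{t0..tf}. pos ix iy (x t) = pos ix iy (xb t)"
    using fit fit' by simp
  then show "qb = qf"
    using constructible_pos[OF x xb] by simp
qed

end
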